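(* Let $G=B(H)$ for some connected graph $H$ with at least one edge. Then $KB_e(G)$ is a cycle, a path, or contains an induced $(n,m)$-necklace with $n\ge 6$ and $m\ge 1$ whose cycle has good neighbours in $KB_e(G)$.
   Context: All graphs are finite, simple and undirected. A biclique of a graph $X$ is a maximal (with respect to inclusion) induced subgraph of $X$ that is a complete bipartite graph $K_{p,q}$ with $p,q\ge 1$; $KB_e(X)$ has one vertex per biclique of $X$, two distinct vertices adjacent iff the bicliques share an edge. The burgeon graph $B(H)$ is obtained by replacing each vertex $v$ of $H$ by a clique $C_v$ on $d(v)$ vertices, whose vertices are in bijection with the neighbours of $v$; for each edge $uv$ of $H$, the vertex of $C_v$ corresponding to $u$ is joined to the vertex of $C_u$ corresponding to $v$; there are no other edges between different cliques. For $n\ge3$, $m\ge1$, the $(n,m)$-necklace is the graph on $n+m$ vertices consisting of an induced cycle $C_n$ and a complete graph $K_m$ such that, for one fixed edge $xy$ of the cycle, every vertex of the $K_m$ is adjacent to $x$ and $y$ and to no other vertex of the cycle. An induced cycle $C=v_0\ldots v_{n-1}$ ($n\ge5$) of a graph $X$ has good neighbours in $X$ if for every vertex $v\in V(X)\setminus V(C)$ and every $i$ (indices mod $n$), $\{v_{i-1},v_{i+1}\}\subseteq N(v)$ implies $v_i\in N(v)$. *)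

theory Defs
  imports Main
begin

definition graph :: "'a set \<Rightarrow> ('a \<Rightarrow> 'a \<Rightarrow> bool) \<Rightarrow> bool" where
  "graph V E \<longleftrightarrow> finite V \<and> (\<forall>x y. E x y \<longrightarrow> x \<in> V \<and> y \<in> V)
     \<and> (\<forall>x y. E x y \<longrightarrow> E y x) \<and> (\<forall>x. \<not> E x x)"

definition connected_graph :: "'a set \<Rightarrow> ('a \<Rightarrow> 'a \<Rightarrow> bool) \<Rightarrow> bool" where
  "connected_graph V E \<longleftrightarrow> (\<forall>u\<in>V. \<forall>v\<in>V. E\<^sup>*\<^sup>* u v)"

definition has_edge :: "('a \<Rightarrow> 'a \<Rightarrow> bool) \<Rightarrow> bool" where
  "has_edge E \<longleftrightarrow> (\<exists>x y. E x y)"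

definition induces_complete_bipartite :: "('a \<Rightarrow> 'a \<Rightarrow> bool) \<Rightarrow> 'a set \<Rightarrow> bool" where
  "induces_complete_bipartite E S \<longleftrightarrow>
     (\<exists>A B. A \<noteq> {} \<and> B \<noteq> {} \<and> A \<inter> B = {} \<and> S = A \<union> B
        \<and> (\<forall>x\<in>A. \<forall>y\<in>A. \<not> E x y) \<and> (\<forall>x\<in>B. \<forall>y\<in>B. \<not> E x y)
        \<and> (\<forall>x\<in>A. \<forall>y\<in>B. E x y))"

definition biclique :: "'a set \<Rightarrow> ('a \<Rightarrow> 'a \<Rightarrow> bool) \<Rightarrow> 'a set \<Rightarrow> bool" where
  "biclique V E S \<longleftrightarrow> S \<subseteq> V \<and> induces_complete_bipartite E S
     \<and> (\<forall>T. S \<subseteq> T \<and> T \<subseteq> V \<and> induces_complete_bipartite E T \<longrightarrow> T = S)"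

definition KBe_V :: "'a set \<Rightarrow> ('a \<Rightarrow> 'a \<Rightarrow> bool) \<Rightarrow> 'a set set" where
  "KBe_V V E = {S. biclique V E S}"

definition KBe_E :: "'a set \<Rightarrow> ('a \<Rightarrow> 'a \<Rightarrow> bool) \<Rightarrow> 'a set \<Rightarrow> 'a set \<Rightarrow> bool" where
  "KBe_E V E S T \<longleftrightarrow> S \<noteq> T \<and> biclique V E S \<and> biclique V E T
     \<and> (\<exists>x\<in>S \<inter> T. \<exists>y\<in>S \<inter> T. E x y)"

text \<open>Burgeon graph B(H): the vertex (v,u) is the vertex of the clique C_v
corresponding to the neighbour u of v.\<close>
definition burgeon_V :: "'a set \<Rightarrow> ('a \<Rightarrow> 'a \<Rightarrow> bool) \<Rightarrow> ('a \<times> 'a) set" where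
  "burgeon_V V E = {(v, u). v \<in> V \<and> E v u}"

definition burgeon_E :: "('a \<Rightarrow> 'a \<Rightarrow> bool) \<Rightarrow> ('a \<times> 'a) \<Rightarrow> ('a \<times> 'a) \<Rightarrow> bool" where
  "burgeon_E E p q \<longleftrightarrow> E (fst p) (snd p) \<and> E (fst q) (snd q)
     \<and> ((fst p = fst q \<and> snd p \<noteq> snd q) \<or> (fst p = snd q \<and> snd p = fst q))"

definition is_path_graph :: "'a set \<Rightarrow> ('a \<Rightarrow> 'a \<Rightarrow> bool) \<Rightarrow> bool" where
  "is_path_graph V E \<longleftrightarrow> (\<exists>vs. vs \<noteq> [] \<and> distinct vs \<and> set vs = V
     \<and> (\<forall>x y. E x y \<longleftrightarrow> (\<exists>i. Suc i < length vs \<and>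
            ((x = vs ! i \<and> y = vs ! Suc i) \<or> (y = vs ! i \<and> x = vs ! Suc i)))))"

definition is_cycle_graph :: "'a set \<Rightarrow> ('a \<Rightarrow> 'a \<Rightarrow> bool) \<Rightarrow> bool" where
  "is_cycle_graph V E \<longleftrightarrow> (\<exists>vs. length vs \<ge> 3 \<and> distinct vs \<and> set vs = V
     \<and> (\<forall>x y. E x y \<longleftrightarrow> (\<exists>i<length vs.
            (x = vs ! i \<and> y = vs ! (Suc i mod length vs))
          \<or> (y = vs ! i \<and> x = vs ! (Suc i mod length vs)))))"

definition induced_cycle :: "'a set \<Rightarrow> ('a \<Rightarrow> 'a \<Rightarrow> bool) \<Rightarrow> 'a list \<Rightarrow> bool" where
  "induced_cycle V E cs \<longleftrightarrow> length cs \<ge> 3 \<and> distinct cs \<and> set cs \<subseteq> V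
     \<and> (\<forall>i<length cs. \<forall>j<length cs. E (cs ! i) (cs ! j) \<longleftrightarrow>
           (j = Suc i mod length cs \<or> i = Suc j mod length cs))"

definition good_neighbours :: "'a set \<Rightarrow> ('a \<Rightarrow> 'a \<Rightarrow> bool) \<Rightarrow> 'a list \<Rightarrow> bool" where
  "good_neighbours V E cs \<longleftrightarrow> (let n = length cs in
     (\<forall>v \<in> V - set cs. \<forall>i<n.
        E v (cs ! ((i + n - 1) mod n)) \<and> E v (cs ! (Suc i mod n)) \<longrightarrow> E v (cs ! i)))"

text \<open>cs together with K induces an (n,m)-necklace with n = length cs, m = card K,
whose cycle is cs and whose fixed cycle edge is cs!j cs!(j+1 mod n).\<close>
definition induced_necklace :: "'a set \<Rightarrow> ('a \<Rightarrow> 'a \<Rightarrow> bool) \<Rightarrow> 'a list \<Rightarrow> 'a set \<Rightarrow> bool" where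
  "induced_necklace V E cs K \<longleftrightarrow> induced_cycle V E cs \<and> finite K \<and> K \<noteq> {}
     \<and> K \<subseteq> V \<and> K \<inter> set cs = {}
     \<and> (\<forall>x\<in>K. \<forall>y\<in>K. x \<noteq> y \<longrightarrow> E x y)
     \<and> (\<exists>j<length cs. \<forall>x\<in>K. \<forall>i<length cs.
          E x (cs ! i) \<longleftrightarrow> (i = j \<or> i = Suc j mod length cs))"

end

theory Submission
  imports Defs
begin

text \<open>
Two cliques C_u, C_v of B(H) are joined by at most one edge, so every 4-cycle of B(H) has chords
and its bicliques are induced stars. Unless H = K_2, the maximal ones are the cherries
(v,w) -- (v,u) -- (u,v), one for every path u - v - w of H, and two cherries share an edge iff
they share the central edge (v,u) -- (u,v) or one arises from the other by exchanging centre and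
leaf inside C_v. If a vertex b of H has three neighbours a, c, d and moreover a fourth neighbour e,
or a has a neighbour x other than b, then the six cherries centred at (b,y) with leaf (b,z) for
distinct y, z in {a, c, d} form an induced hexagon with good neighbours, and the cherry centred at
(b,a) with leaf (b,e), respectively at (a,b) with leaf (a,x), meets exactly two consecutive ones:
a (6,1)-necklace. Otherwise every cherry meets at
most two others, and KB_e(B(H)) is connected because H is; a longest path of such a graph spans
it, so the graph is a path or a cycle.
\<close>

section \<open>Connected graphs of maximum degree two\<close>

lemma graph_sym: "graph V R \<Longrightarrow> R x y \<Longrightarrow> R y x"
  and graph_irrefl: "graph V R \<Longrightarrow> \<not> R x x"
  and graph_edge_in: "graph V R \<Longrightarrow> R x y \<Longrightarrow> x \<in> V \<and> y \<in> V"
  by (auto simp: graph_def)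

definition simple_path :: "'a set \<Rightarrow> ('a \<Rightarrow> 'a \<Rightarrow> bool) \<Rightarrow> 'a list \<Rightarrow> bool" where
  "simple_path V R vs \<longleftrightarrow> vs \<noteq> [] \<and> distinct vs \<and> set vs \<subseteq> V \<and> successively R vs"

definition longest_path :: "'a set \<Rightarrow> ('a \<Rightarrow> 'a \<Rightarrow> bool) \<Rightarrow> 'a list \<Rightarrow> bool" where
  "longest_path V R vs \<longleftrightarrow> simple_path V R vs \<and> (\<forall>ws. simple_path V R ws \<longrightarrow> length ws \<le> length vs)"

lemma longest_path_exists:
  assumes "finite V" "V \<noteq> {}"
  obtains vs where "longest_path V R vs"
proof -
  obtain x where "x \<in> V" using assms(2) by blast
  then have "simple_path V R [x]" by (simp add: simple_path_def)
  moreover have "\<forall>ws. simple_path V R ws \<longrightarrow> length ws < Suc (card V)"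
    using card_mono[OF assms(1)] distinct_card unfolding simple_path_def by (metis less_Suc_eq_le)
  ultimately show thesis
    using ex_has_greatest_nat[of "simple_path V R"] that unfolding longest_path_def by blast
qed

lemma longest_path_rev:
  assumes "graph V R" "longest_path V R vs"
  shows "longest_path V R (rev vs)"
proof -
  have "successively (\<lambda>x y. R y x) vs"
    using assms successively_mono graph_sym unfolding longest_path_def simple_path_def by metis
  then show ?thesis using assms(2) unfolding longest_path_def simple_path_def by simp
qed

lemma longest_path_last_neighbour:
  assumes "graph V R" "longest_path V R vs" "R (last vs) y"
  shows "y \<in> set vs"
proof (rule ccontr)
  assume "y \<notin> set vs"
  then have "simple_path V R (vs @ [y])"
    using assms graph_edge_in[OF assms(1,3)] unfolding longest_path_def simple_path_def
    by (auto simp: successively_append_iff)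
  then show False using assms(2) unfolding longest_path_def by fastforce
qed

lemma longest_path_hd_neighbour:
  assumes "graph V R" "longest_path V R vs" "R (hd vs) y"
  shows "y \<in> set vs"
  using longest_path_last_neighbour[OF assms(1) longest_path_rev[OF assms(1,2)]] assms(3)
  by (simp add: last_rev)

locale max_degree_2_graph =
  fixes V :: "'a set" and R :: "'a \<Rightarrow> 'a \<Rightarrow> bool"
  assumes graph: "graph V R"
    and max_degree_2: "\<And>x a b c. R x a \<Longrightarrow> R x b \<Longrightarrow> R x c \<Longrightarrow> a = b \<or> a = c \<or> b = c"
begin

lemma simple_path_inner_neighbour:
  assumes "simple_path V R vs" "0 < i" "Suc i < length vs" "R (vs ! i) y"
  shows "y = vs ! (i - 1) \<or> y = vs ! Suc i"
proof -
  have step: "R (vs ! k) (vs ! Suc k)" if "Suc k < length vs" for k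
    using assms(1) successively_nth that unfolding simple_path_def by blast
  have "R (vs ! (i - 1)) (vs ! i)" "R (vs ! i) (vs ! Suc i)"
    using step[of "i - 1"] step[of i] assms(2,3) by simp_all
  moreover have "vs ! (i - 1) \<noteq> vs ! Suc i"
    using assms nth_eq_iff_index_eq[of vs "i - 1" "Suc i"] unfolding simple_path_def by simp
  ultimately show ?thesis using max_degree_2 graph_sym[OF graph] assms(4) by metis
qed

lemma simple_path_chord:
  assumes path: "simple_path V R vs" and ij: "i < j" "j < length vs" and edge: "R (vs ! i) (vs ! j)"
  shows "j = Suc i \<or> (i = 0 \<and> j = length vs - 1)"
proof -
  have inj: "vs ! k = vs ! l \<longleftrightarrow> k = l" if "k < length vs" "l < length vs" for k l
    using path that nth_eq_iff_index_eq unfolding simple_path_def by blast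
  consider "0 < i" | "i = 0" "j = length vs - 1" | "i = 0" "0 < j" "Suc j < length vs"
    using ij by linarith
  then show ?thesis
  proof cases
    case 1
    then show ?thesis using simple_path_inner_neighbour[OF path 1 _ edge] inj ij by fastforce
  next
    case 3
    then show ?thesis
      using simple_path_inner_neighbour[OF path 3(2,3) graph_sym[OF graph edge]] inj ij by fastforce
  qed simp
qed

lemma longest_path_neighbour:
  assumes "longest_path V R vs" "x \<in> set vs" "R x y"
  shows "y \<in> set vs"
proof -
  have path: "simple_path V R vs" using assms(1) unfolding longest_path_def by simp
  obtain i where i: "i < length vs" "x = vs ! i" using assms(2) by (auto simp: in_set_conv_nth)
  consider "i = 0" | "i = length vs - 1" | "0 < i" "Suc i < length vs" using i by linarith
  then show ?thesis
  proof cases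
    case 1
    then show ?thesis using longest_path_hd_neighbour[OF graph assms(1)] assms(3) i path
      by (simp add: hd_conv_nth simple_path_def)
  next
    case 2
    then show ?thesis using longest_path_last_neighbour[OF graph assms(1)] assms(3) i path
      by (simp add: last_conv_nth simple_path_def)
  next
    case 3
    then show ?thesis
      using simple_path_inner_neighbour[OF path 3] assms(3) i
      by (metis Suc_lessD less_imp_diff_less nth_mem)
  qed
qed

lemma longest_path_spanning:
  assumes "connected_graph V R" "longest_path V R vs"
  shows "set vs = V"
proof
  show sub: "set vs \<subseteq> V" using assms(2) unfolding longest_path_def simple_path_def by simp
  have hd: "hd vs \<in> set vs" using assms(2) unfolding longest_path_def simple_path_def by simp
  show "V \<subseteq> set vs"
  proof
    fix v assume "v \<in> V"
    then have "R\<^sup>*\<^sup>* (hd vs) v" using assms(1) sub hd unfolding connected_graph_def by blast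
    then show "v \<in> set vs"
      by (induction rule: rtranclp_induct) (use hd longest_path_neighbour[OF assms(2)] in auto)
  qed
qed

lemma spanning_path_edge:
  assumes path: "simple_path V R vs" and span: "set vs = V" and edge: "R x y"
  shows "(\<exists>i. Suc i < length vs \<and> ((x = vs ! i \<and> y = vs ! Suc i) \<or> (y = vs ! i \<and> x = vs ! Suc i)))
    \<or> (x = vs ! 0 \<and> y = vs ! (length vs - 1)) \<or> (y = vs ! 0 \<and> x = vs ! (length vs - 1))"
proof -
  obtain i j where ij: "i < length vs" "j < length vs" "x = vs ! i" "y = vs ! j"
    using graph_edge_in[OF graph edge] span by (metis in_set_conv_nth)
  have "i \<noteq> j" using graph_irrefl[OF graph] edge ij by auto
  then consider "i < j" | "j < i" by linarith
  then show ?thesis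
  proof cases
    case 1
    then show ?thesis using simple_path_chord[OF path 1 ij(2)] edge ij by auto
  next
    case 2
    then show ?thesis using simple_path_chord[OF path 2 ij(1)] graph_sym[OF graph edge] ij by auto
  qed
qed

lemma spanning_path_is_cycle_graph:
  assumes path: "simple_path V R vs" and span: "set vs = V"
    and long: "3 \<le> length vs" and closing: "R (vs ! 0) (vs ! (length vs - 1))"
  shows "is_cycle_graph V R"
  unfolding is_cycle_graph_def
proof (intro exI[of _ vs] conjI allI)
  let ?n = "length vs"
  have "Suc (?n - 1) = ?n" using long by linarith
  then have last_step: "Suc (?n - 1) mod ?n = 0" by simp
  fix x y
  show "R x y \<longleftrightarrow> (\<exists>i<?n. x = vs ! i \<and> y = vs ! (Suc i mod ?n) \<or> y = vs ! i \<and> x = vs ! (Suc i mod ?n))"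
  proof
    assume "R x y"
    from spanning_path_edge[OF path span this]
    consider i where "Suc i < ?n" "x = vs ! i \<and> y = vs ! Suc i \<or> y = vs ! i \<and> x = vs ! Suc i"
      | "x = vs ! 0 \<and> y = vs ! (?n - 1) \<or> y = vs ! 0 \<and> x = vs ! (?n - 1)"
      by blast
    then show "\<exists>i<?n. x = vs ! i \<and> y = vs ! (Suc i mod ?n) \<or> y = vs ! i \<and> x = vs ! (Suc i mod ?n)"
    proof cases
      case (1 i)
      then show ?thesis by (intro exI[of _ i]) auto
    next
      case 2
      then show ?thesis using last_step long by (intro exI[of _ "?n - 1"]) auto
    qed
  next
    assume "\<exists>i<?n. x = vs ! i \<and> y = vs ! (Suc i mod ?n) \<or> y = vs ! i \<and> x = vs ! (Suc i mod ?n)"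
    then obtain i where i: "i < ?n" "x = vs ! i \<and> y = vs ! (Suc i mod ?n) \<or> y = vs ! i \<and> x = vs ! (Suc i mod ?n)"
      by blast
    have "R (vs ! i) (vs ! (Suc i mod ?n))"
    proof (cases "Suc i < ?n")
      case True then show ?thesis using path unfolding simple_path_def by (simp add: successively_nth)
    next
      case False
      then have "Suc i = ?n" using i(1) by simp
      then have "i = ?n - 1" "Suc i mod ?n = 0" by auto
      then show ?thesis using closing graph_sym[OF graph] by auto
    qed
    then show "R x y" using i(2) graph_sym[OF graph] by auto
  qed
qed (use assms in \<open>auto simp: simple_path_def\<close>)

lemma spanning_path_is_path_graph:
  assumes path: "simple_path V R vs" and span: "set vs = V"
    and not_closing: "\<not> (3 \<le> length vs \<and> R (vs ! 0) (vs ! (length vs - 1)))"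
  shows "is_path_graph V R"
  unfolding is_path_graph_def
proof (intro exI[of _ vs] conjI allI)
  fix x y
  show "R x y \<longleftrightarrow> (\<exists>i. Suc i < length vs \<and> (x = vs ! i \<and> y = vs ! Suc i \<or> y = vs ! i \<and> x = vs ! Suc i))"
  proof
    assume edge: "R x y"
    from spanning_path_edge[OF path span edge]
    consider (consecutive) "\<exists>i. Suc i < length vs \<and> (x = vs ! i \<and> y = vs ! Suc i \<or> y = vs ! i \<and> x = vs ! Suc i)"
      | (ends) "x = vs ! 0 \<and> y = vs ! (length vs - 1) \<or> y = vs ! 0 \<and> x = vs ! (length vs - 1)"
      by blast
    then show "\<exists>i. Suc i < length vs \<and> (x = vs ! i \<and> y = vs ! Suc i \<or> y = vs ! i \<and> x = vs ! Suc i)"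
    proof cases
      case ends
      have "length vs \<noteq> 1" using ends edge graph_irrefl[OF graph] by auto
      moreover have "\<not> 3 \<le> length vs" using ends edge not_closing graph_sym[OF graph] by auto
      moreover have "length vs \<noteq> 0" using path unfolding simple_path_def by simp
      ultimately have "length vs = 2" by linarith
      then show ?thesis using ends by (intro exI[of _ 0]) auto
    qed
  next
    assume "\<exists>i. Suc i < length vs \<and> (x = vs ! i \<and> y = vs ! Suc i \<or> y = vs ! i \<and> x = vs ! Suc i)"
    then show "R x y" using path successively_nth graph_sym[OF graph] unfolding simple_path_def by metis
  qed
qed (use assms in \<open>auto simp: simple_path_def\<close>)

theorem connected_path_or_cycle:
  assumes "connected_graph V R" "V \<noteq> {}"
  shows "is_cycle_graph V R \<or> is_path_graph V R"
proof -
  obtain vs where longest: "longest_path V R vs"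
    using longest_path_exists graph assms(2) unfolding graph_def by metis
  then have path: "simple_path V R vs" unfolding longest_path_def by simp
  have span: "set vs = V" using longest_path_spanning[OF assms(1) longest] .
  show ?thesis
    using spanning_path_is_cycle_graph[OF path span] spanning_path_is_path_graph[OF path span] by blast
qed

end

lemma is_path_graph_singleton: "(\<And>x y. \<not> R x y) \<Longrightarrow> is_path_graph {v} R"
  unfolding is_path_graph_def by (intro exI[of _ "[v]"]) auto

section \<open>Stars in graphs whose 4-cycles have chords\<close>

definition star_with_centre :: "('a \<Rightarrow> 'a \<Rightarrow> bool) \<Rightarrow> 'a set \<Rightarrow> 'a \<Rightarrow> bool" where
  "star_with_centre E T x \<longleftrightarrow> x \<in> T \<and> T - {x} \<noteq> {} \<and> (\<forall>y\<in>T - {x}. E x y)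
     \<and> (\<forall>y\<in>T - {x}. \<forall>z\<in>T - {x}. \<not> E y z)"

lemma complete_bipartite_is_star:
  assumes sym: "\<And>x y. E x y \<Longrightarrow> E y x"
    and C4_chord: "\<And>x x' y y'. E x y \<Longrightarrow> E x y' \<Longrightarrow> E x' y \<Longrightarrow> E x' y' \<Longrightarrow> x \<noteq> x' \<Longrightarrow> y \<noteq> y'
        \<Longrightarrow> E y y'"
    and "induces_complete_bipartite E T"
  obtains x where "star_with_centre E T x"
proof -
  obtain A B where AB: "A \<noteq> {}" "B \<noteq> {}" "A \<inter> B = {}" "T = A \<union> B"
     "\<forall>x\<in>A. \<forall>y\<in>A. \<not> E x y" "\<forall>x\<in>B. \<forall>y\<in>B. \<not> E x y" "\<forall>x\<in>A. \<forall>y\<in>B. E x y"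
    using assms(3) unfolding induces_complete_bipartite_def by blast
  obtain a b where ab: "a \<in> A" "b \<in> B" using AB by blast
  consider "A = {a}" | "B = {b}" | a' b' where "a' \<in> A" "a' \<noteq> a" "b' \<in> B" "b' \<noteq> b"
    using ab by blast
  then show thesis
  proof cases
    case 1
    then have "star_with_centre E T a" using AB ab unfolding star_with_centre_def by auto
    then show thesis by (rule that)
  next
    case 2
    then have "star_with_centre E T b" using AB ab sym unfolding star_with_centre_def by auto
    then show thesis by (rule that)
  next
    case 3
    then show thesis using C4_chord[of a b b' a'] AB ab by blast
  qed
qed

lemma star_centre_unique:
  assumes "star_with_centre E T x" "a \<in> T" "b \<in> T" "c \<in> T" "b \<noteq> c" "E a b" "E a c"
  shows "a = x"
  using assms unfolding star_with_centre_def by blast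

section \<open>Bicliques of the burgeon graph\<close>

definition cherry :: "'a \<Rightarrow> 'a \<Rightarrow> 'a \<Rightarrow> ('a \<times> 'a) set" where
  "cherry v u w = {(v, u), (v, w), (u, v)}"

lemma mem_cherry_iff: "(a, b) \<in> cherry v u w \<longleftrightarrow> (a = v \<and> b = u) \<or> (a = v \<and> b = w) \<or> (a = u \<and> b = v)"
  by (auto simp: cherry_def)

locale burgeon_graph =
  fixes VH :: "'a set" and E :: "'a \<Rightarrow> 'a \<Rightarrow> bool"
  assumes graph: "graph VH E"
begin

abbreviation "VG \<equiv> burgeon_V VH E"
abbreviation "EG \<equiv> burgeon_E E"
abbreviation "KV \<equiv> KBe_V VG EG"
abbreviation "KE \<equiv> KBe_E VG EG"

lemmas E_sym = graph_sym[OF graph] and E_irrefl = graph_irrefl[OF graph]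
  and edge_in_VH = graph_edge_in[OF graph]

lemma burgeon_E_iff: "EG (a, b) (c, d) \<longleftrightarrow> E a b \<and> E c d \<and> ((a = c \<and> b \<noteq> d) \<or> (a = d \<and> b = c))"
  by (simp add: burgeon_E_def)

lemma burgeon_V_iff: "(a, b) \<in> VG \<longleftrightarrow> E a b"
  using edge_in_VH by (auto simp: burgeon_V_def)

lemma burgeon_E_sym: "EG x y \<Longrightarrow> EG y x"
  by (cases x; cases y) (auto simp: burgeon_E_iff E_sym)

lemma burgeon_E_neighbour: "EG (v, u) y \<Longrightarrow> (\<exists>z. y = (v, z) \<and> z \<noteq> u \<and> E v z) \<or> y = (u, v)"
  by (cases y) (auto simp: burgeon_E_iff)

text \<open>A 4-cycle of B(H) cannot leave a clique C_v, since C_v and C_u are joined by a single edge.\<close>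

lemma burgeon_C4_chord:
  assumes "EG x y" "EG x y'" "EG x' y" "EG x' y'" "x \<noteq> x'" "y \<noteq> y'"
  shows "EG y y'"
proof -
  obtain v u where x: "x = (v, u)" by (cases x)
  obtain p q where x': "x' = (p, q)" by (cases x')
  have "v \<noteq> u" using assms(1) E_irrefl x by (cases y) (auto simp: burgeon_E_iff)
  with burgeon_E_neighbour[of v u y] burgeon_E_neighbour[of v u y'] assms x x' show ?thesis
    by (auto simp: burgeon_E_iff)
qed

definition wedge :: "'a \<Rightarrow> 'a \<Rightarrow> 'a \<Rightarrow> bool" where
  "wedge v u w \<longleftrightarrow> E v u \<and> E v w \<and> u \<noteq> w"

lemma wedge_distinct: "wedge v u w \<Longrightarrow> v \<noteq> u \<and> v \<noteq> w \<and> u \<noteq> w"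
  using E_irrefl unfolding wedge_def by blast

lemma cherry_complete_bipartite:
  assumes "wedge v u w"
  shows "induces_complete_bipartite EG (cherry v u w)"
  unfolding induces_complete_bipartite_def
  by (rule exI[of _ "{(v, u)}"], rule exI[of _ "{(v, w), (u, v)}"])
    (use assms wedge_distinct[OF assms] in \<open>auto simp: wedge_def cherry_def burgeon_E_iff E_sym\<close>)

lemma cherry_subset_burgeon_V: "wedge v u w \<Longrightarrow> cherry v u w \<subseteq> VG"
  unfolding wedge_def cherry_def by (auto simp: burgeon_V_iff E_sym)

lemma star_subset_cherry:
  assumes star: "star_with_centre EG T (v, u)" and "(v, w) \<in> T" "w \<noteq> u"
  shows "T \<subseteq> cherry v u w"
proof
  fix y assume "y \<in> T"
  show "y \<in> cherry v u w"
  proof (cases "y = (v, u)")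
    case False
    then have "EG (v, u) y" using star \<open>y \<in> T\<close> unfolding star_with_centre_def by blast
    then consider z where "y = (v, z)" "z \<noteq> u" "E v z" | "y = (u, v)"
      using burgeon_E_neighbour by blast
    then show ?thesis
    proof cases
      case 1
      have "EG (v, u) (v, w)" using star assms(2,3) unfolding star_with_centre_def by blast
      then have "E v w" by (simp add: burgeon_E_iff)
      then have "z \<noteq> w \<Longrightarrow> EG y (v, w)" using 1 by (simp add: burgeon_E_iff)
      then show ?thesis
        using star assms(2,3) \<open>y \<in> T\<close> False 1 unfolding star_with_centre_def cherry_def by blast
    qed (simp add: cherry_def)
  qed (simp add: cherry_def)
qed

lemma biclique_cherry:
  assumes "wedge v u w"
  shows "biclique VG EG (cherry v u w)"
  unfolding biclique_def
proof (intro conjI allI impI)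
  fix T assume T: "cherry v u w \<subseteq> T \<and> T \<subseteq> VG \<and> induces_complete_bipartite EG T"
  then obtain x where star: "star_with_centre EG T x"
    using complete_bipartite_is_star[of EG T] burgeon_E_sym burgeon_C4_chord by blast
  have in_T: "(v, u) \<in> T" "(v, w) \<in> T" "(u, v) \<in> T" using T unfolding cherry_def by auto
  have "EG (v, u) (v, w)" "EG (v, u) (u, v)"
    using assms wedge_distinct[OF assms] unfolding wedge_def by (auto simp: burgeon_E_iff E_sym)
  then have "x = (v, u)" using star_centre_unique[OF star in_T] wedge_distinct[OF assms] by simp
  then show "T = cherry v u w" using star_subset_cherry star in_T(2) T wedge_distinct[OF assms] by blast
qed (use assms cherry_subset_burgeon_V cherry_complete_bipartite in auto)

text \<open>For connected H this fails only if H = K_2.\<close>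

definition edges_in_wedges :: bool where
  "edges_in_wedges \<longleftrightarrow> (\<forall>v u. E v u \<longrightarrow> (\<exists>w. wedge v u w) \<or> (\<exists>w. wedge u v w))"

lemma connected_single_edge:
  assumes "connected_graph VH E" "E x y" "\<And>z. E x z \<Longrightarrow> z = y" "\<And>z. E y z \<Longrightarrow> z = x"
  shows "VH = {x, y}"
proof
  show "{x, y} \<subseteq> VH" using edge_in_VH assms(2) by blast
  show "VH \<subseteq> {x, y}"
  proof
    fix z assume "z \<in> VH"
    then have "E\<^sup>*\<^sup>* x z" using assms(1,2) edge_in_VH unfolding connected_graph_def by blast
    then show "z \<in> {x, y}" by (induction rule: rtranclp_induct) (use assms(3,4) in auto)
  qed
qed

lemma edges_in_wedges_if_wedge:
  assumes "connected_graph VH E" "wedge b p q"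
  shows edges_in_wedges
  unfolding edges_in_wedges_def
proof (intro allI impI)
  fix v u assume "E v u"
  show "(\<exists>w. wedge v u w) \<or> (\<exists>w. wedge u v w)"
  proof (rule ccontr)
    assume "\<not> ((\<exists>w. wedge v u w) \<or> (\<exists>w. wedge u v w))"
    then have "\<And>z. E v z \<Longrightarrow> z = u" "\<And>z. E u z \<Longrightarrow> z = v"
      using \<open>E v u\<close> E_sym unfolding wedge_def by blast+
    moreover from this have "VH = {v, u}" using connected_single_edge[OF assms(1) \<open>E v u\<close>] by blast
    ultimately show False using assms(2) edge_in_VH unfolding wedge_def by blast
  qed
qed

lemma biclique_is_cherry:
  assumes edges_in_wedges and S: "biclique VG EG S"
  shows "\<exists>v u w. wedge v u w \<and> S = cherry v u w"
proof -
  have max: "\<And>T. S \<subseteq> T \<Longrightarrow> T \<subseteq> VG \<Longrightarrow> induces_complete_bipartite EG T \<Longrightarrow> T = S"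
    and S_VG: "S \<subseteq> VG" using S unfolding biclique_def by auto
  obtain v u where star: "star_with_centre EG S (v, u)"
    using complete_bipartite_is_star[of EG S] S burgeon_E_sym burgeon_C4_chord
    unfolding biclique_def by (metis surj_pair)
  then have "E v u" using S_VG burgeon_V_iff unfolding star_with_centre_def by blast
  have "\<exists>v' u' w'. wedge v' u' w' \<and> S \<subseteq> cherry v' u' w'"
  proof (cases "\<exists>z. (v, z) \<in> S \<and> z \<noteq> u")
    case True
    then obtain z where "(v, z) \<in> S" "z \<noteq> u" by blast
    then have "wedge v u z" using \<open>E v u\<close> S_VG burgeon_V_iff unfolding wedge_def by blast
    then show ?thesis using star_subset_cherry[OF star \<open>(v, z) \<in> S\<close> \<open>z \<noteq> u\<close>] by blast
  next
    case False
    then have "S \<subseteq> {(v, u), (u, v)}"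
      using star burgeon_E_neighbour unfolding star_with_centre_def by blast
    moreover have "(\<exists>w. wedge v u w) \<or> (\<exists>w. wedge u v w)"
      using assms(1) \<open>E v u\<close> unfolding edges_in_wedges_def by blast
    ultimately show ?thesis unfolding cherry_def by blast
  qed
  then obtain v' u' w' where wedge: "wedge v' u' w'" and "S \<subseteq> cherry v' u' w'" by blast
  then have "cherry v' u' w' = S"
    using max cherry_subset_burgeon_V[OF wedge] cherry_complete_bipartite[OF wedge] by simp
  then show ?thesis using wedge by blast
qed

lemma KBe_V_cherry: "edges_in_wedges \<Longrightarrow> S \<in> KV \<Longrightarrow> \<exists>v u w. wedge v u w \<and> S = cherry v u w"
  using biclique_is_cherry unfolding KBe_V_def by blast

lemma cherry_in_KBe_V: "wedge v u w \<Longrightarrow> cherry v u w \<in> KV"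
  using biclique_cherry unfolding KBe_V_def by blast

lemma cherry_eq_iff:
  assumes "wedge v u w" "wedge v' u' w'"
  shows "cherry v u w = cherry v' u' w' \<longleftrightarrow> (v, u, w) = (v', u', w')"
proof
  assume eq: "cherry v u w = cherry v' u' w'"
  have "(v, u) \<in> cherry v' u' w'" "(v, w) \<in> cherry v' u' w'" "(u, v) \<in> cherry v' u' w'"
    unfolding eq[symmetric] by (simp_all add: cherry_def)
  then show "(v, u, w) = (v', u', w')"
    using wedge_distinct[OF assms(1)] wedge_distinct[OF assms(2)] unfolding mem_cherry_iff by blast
qed simp

lemma cherry_shared_edge:
  assumes "wedge p q r" "x \<in> cherry p q r" "y \<in> cherry p q r" "EG x y"
  shows "{x, y} = {(p, q), (p, r)} \<or> {x, y} = {(p, q), (q, p)}"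
  using assms wedge_distinct[OF assms(1)] E_irrefl unfolding cherry_def
  by (auto simp: burgeon_E_iff)

lemma KBe_E_cherry_iff:
  assumes "wedge v u w" "wedge v' u' w'"
  shows "KE (cherry v u w) (cherry v' u' w') \<longleftrightarrow>
    (v, u, w) \<noteq> (v', u', w') \<and> ((v' = v \<and> u' = u) \<or> (v' = v \<and> u' = w \<and> w' = u) \<or> (v' = u \<and> u' = v))"
proof -
  have "(\<exists>x\<in>cherry v u w \<inter> cherry v' u' w'. \<exists>y\<in>cherry v u w \<inter> cherry v' u' w'. EG x y) \<longleftrightarrow>
        (v' = v \<and> u' = u) \<or> (v' = v \<and> u' = w \<and> w' = u) \<or> (v' = u \<and> u' = v)"
  proof
    assume "\<exists>x\<in>cherry v u w \<inter> cherry v' u' w'. \<exists>y\<in>cherry v u w \<inter> cherry v' u' w'. EG x y"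
    then obtain x y where "x \<in> cherry v u w" "y \<in> cherry v u w" "x \<in> cherry v' u' w'" "y \<in> cherry v' u' w'"
      "EG x y" by blast
    then show "(v' = v \<and> u' = u) \<or> (v' = v \<and> u' = w \<and> w' = u) \<or> (v' = u \<and> u' = v)"
      using cherry_shared_edge[OF assms(1)] cherry_shared_edge[OF assms(2)]
        wedge_distinct[OF assms(1)] wedge_distinct[OF assms(2)]
      by (simp add: doubleton_eq_iff) blast
  next
    have "EG (v, u) (v, w)" "EG (v, u) (u, v)"
      using assms(1) wedge_distinct[OF assms(1)] unfolding wedge_def by (auto simp: burgeon_E_iff E_sym)
    then show "(v' = v \<and> u' = u) \<or> (v' = v \<and> u' = w \<and> w' = u) \<or> (v' = u \<and> u' = v) \<Longrightarrow>
        \<exists>x\<in>cherry v u w \<inter> cherry v' u' w'. \<exists>y\<in>cherry v u w \<inter> cherry v' u' w'. EG x y"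
      unfolding cherry_def by blast
  qed
  then show ?thesis
    using biclique_cherry[OF assms(1)] biclique_cherry[OF assms(2)] cherry_eq_iff[OF assms]
    unfolding KBe_E_def by blast
qed

end

section \<open>A necklace around a vertex of degree three\<close>

text \<open>Consecutive cherries alternately share their central edge and swap centre and leaf in C_b.\<close>

definition hexagon :: "'a \<Rightarrow> 'a \<Rightarrow> 'a \<Rightarrow> 'a \<Rightarrow> ('a \<times> 'a) set list" where
  "hexagon b a c d = [cherry b a c, cherry b a d, cherry b d a, cherry b d c, cherry b c d, cherry b c a]"

lemma all_less_6_iff: "(\<forall>i<(6::nat). P i) \<longleftrightarrow> P 0 \<and> P 1 \<and> P 2 \<and> P 3 \<and> P 4 \<and> P 5"
  by (simp add: numeral_eq_Suc All_less_Suc2)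

context burgeon_graph
begin

text \<open>For connected H this says that H is a path, a cycle or a claw K_{1,3}.\<close>

definition claws_are_components :: bool where
  "claws_are_components \<longleftrightarrow> (\<forall>b a c d. E b a \<and> E b c \<and> E b d \<and> distinct [a, c, d] \<longrightarrow>
      (\<forall>e. E b e \<longrightarrow> e \<in> {a, c, d}) \<and> (\<forall>x. E a x \<longrightarrow> x = b))"

context
  fixes b a c d
  assumes edges_in_wedges and neighbours: "E b a" "E b c" "E b d" and distinct: "distinct [a, c, d]"
begin

lemma length_hexagon: "length (hexagon b a c d) = 6"
  by (simp add: hexagon_def)

lemma hexagon_distinct: "a \<noteq> c" "a \<noteq> d" "c \<noteq> d" "c \<noteq> a" "d \<noteq> a" "d \<noteq> c"
  "b \<noteq> a" "b \<noteq> c" "b \<noteq> d" "a \<noteq> b" "c \<noteq> b" "d \<noteq> b"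
  using distinct neighbours E_irrefl by auto

lemma hexagon_wedges: "wedge b a c" "wedge b a d" "wedge b d a" "wedge b d c" "wedge b c d" "wedge b c a"
  using neighbours distinct unfolding wedge_def by auto

lemma hexagon_induced_cycle: "induced_cycle KV KE (hexagon b a c d)"
  unfolding induced_cycle_def
proof (intro conjI)
  show "distinct (hexagon b a c d)"
    using hexagon_wedges hexagon_distinct by (simp add: hexagon_def cherry_eq_iff)
  show "set (hexagon b a c d) \<subseteq> KV"
    using hexagon_wedges cherry_in_KBe_V by (simp add: hexagon_def)
  show "\<forall>i<length (hexagon b a c d). \<forall>j<length (hexagon b a c d).
      KE (hexagon b a c d ! i) (hexagon b a c d ! j) \<longleftrightarrow>
      (j = Suc i mod length (hexagon b a c d) \<or> i = Suc j mod length (hexagon b a c d))"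
    unfolding length_hexagon all_less_6_iff using hexagon_wedges hexagon_distinct
    by (simp add: hexagon_def KBe_E_cherry_iff)
qed (simp add: length_hexagon)

lemma hexagon_good_neighbours: "good_neighbours KV KE (hexagon b a c d)"
  unfolding good_neighbours_def Let_def
proof (intro ballI)
  fix X assume X: "X \<in> KV - set (hexagon b a c d)"
  then obtain p q r where pqr: "wedge p q r" "X = cherry p q r"
    using KBe_V_cherry[OF \<open>edges_in_wedges\<close>] by blast
  then have "(p, q, r) \<notin> {(b, a, c), (b, a, d), (b, d, a), (b, d, c), (b, c, d), (b, c, a)}"
    using X hexagon_wedges by (auto simp: hexagon_def)
  then show "\<forall>i<length (hexagon b a c d).
      KE X (hexagon b a c d ! ((i + length (hexagon b a c d) - 1) mod length (hexagon b a c d))) \<and>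
      KE X (hexagon b a c d ! (Suc i mod length (hexagon b a c d))) \<longrightarrow> KE X (hexagon b a c d ! i)"
    unfolding length_hexagon all_less_6_iff pqr(2) using hexagon_wedges hexagon_distinct wedge_distinct[OF pqr(1)]
    by (simp add: hexagon_def KBe_E_cherry_iff[OF pqr(1)]) blast
qed

lemma hexagon_necklace:
  assumes "wedge p q r" "cherry p q r \<notin> set (hexagon b a c d)"
    and "\<forall>i<6. KE (cherry p q r) (hexagon b a c d ! i) \<longleftrightarrow> i = 0 \<or> i = 1"
  shows "\<exists>cs K. length cs \<ge> 6 \<and> induced_necklace KV KE cs K \<and> good_neighbours KV KE cs"
proof (intro exI conjI)
  show "induced_necklace KV KE (hexagon b a c d) {cherry p q r}"
    unfolding induced_necklace_def
    using hexagon_induced_cycle assms cherry_in_KBe_V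
    by (auto simp: hexagon_def intro: exI[of _ 0])
qed (use hexagon_good_neighbours in \<open>simp_all add: hexagon_def\<close>)

end

lemma necklace_unless_claws_are_components:
  assumes edges_in_wedges "\<not> claws_are_components"
  shows "\<exists>cs K. length cs \<ge> 6 \<and> induced_necklace KV KE cs K \<and> good_neighbours KV KE cs"
proof -
  obtain b a c d where neighbours: "E b a" "E b c" "E b d" and distinct: "distinct [a, c, d]"
    and "(\<exists>e. E b e \<and> e \<notin> {a, c, d}) \<or> (\<exists>x. E a x \<and> x \<noteq> b)"
    using assms(2) unfolding claws_are_components_def by blast
  note hexagon = hexagon_wedges[OF assms(1) neighbours distinct]
  have "b \<noteq> a" using neighbours E_irrefl by auto
  consider e where "E b e" "e \<notin> {a, c, d}" | x where "E a x" "x \<noteq> b" using \<open>_ \<or> _\<close> by blast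
  then show ?thesis
  proof cases
    case (1 e)
    then have "wedge b a e" using neighbours unfolding wedge_def by auto
    moreover have "cherry b a e \<notin> set (hexagon b a c d)"
      using \<open>wedge b a e\<close> hexagon 1 by (auto simp: hexagon_def cherry_eq_iff)
    moreover have "\<forall>i<6. KE (cherry b a e) (hexagon b a c d ! i) \<longleftrightarrow> i = 0 \<or> i = 1"
      unfolding all_less_6_iff using hexagon hexagon_distinct[OF assms(1) neighbours distinct] 1
      by (simp add: hexagon_def KBe_E_cherry_iff[OF \<open>wedge b a e\<close>] eq_commute[of e])
    ultimately show ?thesis by (rule hexagon_necklace[OF assms(1) neighbours distinct])
  next
    case (2 x)
    then have "wedge a b x" using neighbours E_sym unfolding wedge_def by auto
    moreover have "cherry a b x \<notin> set (hexagon b a c d)"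
      using \<open>wedge a b x\<close> hexagon \<open>b \<noteq> a\<close> by (auto simp: hexagon_def cherry_eq_iff)
    moreover have "\<forall>i<6. KE (cherry a b x) (hexagon b a c d ! i) \<longleftrightarrow> i = 0 \<or> i = 1"
      unfolding all_less_6_iff using hexagon hexagon_distinct[OF assms(1) neighbours distinct] 2
      by (simp add: hexagon_def KBe_E_cherry_iff[OF \<open>wedge a b x\<close>])
    ultimately show ?thesis by (rule hexagon_necklace[OF assms(1) neighbours distinct])
  qed
qed

section \<open>Paths and cycles\<close>

lemma KBe_E_sym: "KE S T \<Longrightarrow> KE T S"
  unfolding KBe_E_def using burgeon_E_sym by (auto simp: Int_commute)

lemma KBe_E_in: "KE S T \<Longrightarrow> S \<in> KV \<and> T \<in> KV"
  unfolding KBe_E_def KBe_V_def by simp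

lemma KBe_graph: "graph KV KE"
proof -
  have "VG \<subseteq> VH \<times> VH" unfolding burgeon_V_def using edge_in_VH by auto
  moreover have "finite VH" using graph unfolding graph_def by simp
  ultimately have "finite VG" by (meson finite_SigmaI finite_subset)
  moreover have "KV \<subseteq> Pow VG" unfolding KBe_V_def biclique_def by auto
  ultimately have "finite KV" by (meson finite_Pow_iff finite_subset)
  moreover have "\<not> KE S S" for S unfolding KBe_E_def by simp
  ultimately show ?thesis using KBe_E_sym KBe_E_in unfolding graph_def by blast
qed

lemma claw_degree: "claws_are_components \<Longrightarrow> E b a \<Longrightarrow> E b c \<Longrightarrow> E b d \<Longrightarrow> distinct [a, c, d]
    \<Longrightarrow> E b e \<Longrightarrow> e \<in> {a, c, d}"
  and claw_leaf: "claws_are_components \<Longrightarrow> E b a \<Longrightarrow> E b c \<Longrightarrow> E b d \<Longrightarrow> distinct [a, c, d]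
    \<Longrightarrow> E a x \<Longrightarrow> x = b"
  unfolding claws_are_components_def by blast+

text \<open>Apart from its swap cherry v w u, a cherry v u w can only meet cherries through its central
edge; two of those would create a claw at v or u with a fourth neighbour or a non-leaf.\<close>

lemma KBe_E_cherry_unique_neighbour:
  assumes claws_are_components "wedge v u w" "wedge p q r" "wedge p' q' r'"
    and "KE (cherry v u w) (cherry p q r)" "KE (cherry v u w) (cherry p' q' r')"
    and "(p, q, r) \<noteq> (v, w, u)" "(p', q', r') \<noteq> (v, w, u)"
  shows "(p, q, r) = (p', q', r')"
proof (rule ccontr)
  assume ne: "(p, q, r) \<noteq> (p', q', r')"
  have "(p = v \<and> q = u \<and> r \<noteq> w) \<or> (p = u \<and> q = v)"
    using KBe_E_cherry_iff[OF assms(2,3)] assms(5,7) by auto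
  moreover have "(p' = v \<and> q' = u \<and> r' \<noteq> w) \<or> (p' = u \<and> q' = v)"
    using KBe_E_cherry_iff[OF assms(2,4)] assms(6,8) by auto
  moreover have "E v u" "E v w" "u \<noteq> w" "E u v" using assms(2) E_sym unfolding wedge_def by auto
  note claw_degree = claw_degree[OF assms(1)] and claw_leaf = claw_leaf[OF assms(1)]
  ultimately show False
  proof (elim disjE conjE)
    assume "p = v" "q = u" "r \<noteq> w" "p' = v" "q' = u" "r' \<noteq> w"
    then show False
      using claw_degree[of v u w r r'] ne assms(3,4) \<open>E v u\<close> \<open>E v w\<close> \<open>u \<noteq> w\<close> unfolding wedge_def by auto
  next
    assume "p = v" "q = u" "r \<noteq> w" "p' = u" "q' = v"
    then show False
      using claw_leaf[of v u w r r'] assms(3,4) \<open>E v u\<close> \<open>E v w\<close> \<open>u \<noteq> w\<close> unfolding wedge_def by auto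
  next
    assume "p = u" "q = v" "p' = v" "q' = u" "r' \<noteq> w"
    then show False
      using claw_leaf[of v u w r' r] assms(3,4) \<open>E v u\<close> \<open>E v w\<close> \<open>u \<noteq> w\<close> unfolding wedge_def by auto
  next
    assume "p = u" "q = v" "p' = u" "q' = v"
    then show False
      using claw_leaf[of u v r r' w] ne assms(3,4) \<open>E v w\<close> \<open>u \<noteq> w\<close> unfolding wedge_def by auto
  qed
qed

lemma KBe_max_degree_2:
  assumes edges_in_wedges claws_are_components "KE X A" "KE X B" "KE X C"
  shows "A = B \<or> A = C \<or> B = C"
proof -
  note KV_cherry = KBe_V_cherry[OF assms(1)]
  have "X \<in> KV" using KBe_E_in assms(3) by blast
  then obtain v u w where X: "wedge v u w" "X = cherry v u w" using KV_cherry by blast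
  have unique: "Y = Z" if YZ: "KE X Y" "KE X Z" "Y \<noteq> cherry v w u" "Z \<noteq> cherry v w u" for Y Z
  proof -
    have "Y \<in> KV" "Z \<in> KV" using YZ(1,2) KBe_E_in by blast+
    obtain p q r where Y: "wedge p q r" "Y = cherry p q r" using \<open>Y \<in> KV\<close> KV_cherry by blast
    obtain p' q' r' where Z: "wedge p' q' r'" "Z = cherry p' q' r'" using \<open>Z \<in> KV\<close> KV_cherry by blast
    have "(p, q, r) \<noteq> (v, w, u)" "(p', q', r') \<noteq> (v, w, u)" using YZ(3,4) Y(2) Z(2) by auto
    moreover have "KE (cherry v u w) (cherry p q r)" "KE (cherry v u w) (cherry p' q' r')"
      using YZ(1,2) unfolding X(2) Y(2) Z(2) .
    ultimately have "(p, q, r) = (p', q', r')"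
      using KBe_E_cherry_unique_neighbour[OF assms(2) X(1) Y(1) Z(1)] by blast
    then show ?thesis using Y(2) Z(2) by simp
  qed
  show ?thesis
  proof (cases "A = cherry v w u")
    case True
    then show ?thesis using unique[OF assms(4,5)] by auto
  next
    case False
    then show ?thesis using unique[OF assms(3,4)] unique[OF assms(3,5)] by auto
  qed
qed

lemma cherries_same_centre_connected:
  assumes "wedge v u w" "wedge v u' w'"
  shows "KE\<^sup>*\<^sup>* (cherry v u w) (cherry v u' w')"
proof -
  have same_edge: "KE\<^sup>*\<^sup>* (cherry v u w) (cherry v u w')" if "wedge v u w" "wedge v u w'" for u w w'
  proof (cases "w = w'")
    case False
    then have "KE (cherry v u w) (cherry v u w')" using KBe_E_cherry_iff[OF that] by simp
    then show ?thesis by simp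
  qed simp
  show ?thesis
  proof (cases "u' = u")
    case False
    then have "wedge v u u'" "wedge v u' u" using assms unfolding wedge_def by auto
    have "KE\<^sup>*\<^sup>* (cherry v u w) (cherry v u u')" using same_edge assms(1) \<open>wedge v u u'\<close> .
    also have "KE (cherry v u u') (cherry v u' u)"
      using KBe_E_cherry_iff[OF \<open>wedge v u u'\<close> \<open>wedge v u' u\<close>] False by simp
    also have "KE\<^sup>*\<^sup>* (cherry v u' u) (cherry v u' w')" using same_edge \<open>wedge v u' u\<close> assms(2) .
    finally show ?thesis .
  qed (use same_edge assms in simp)
qed

lemma KBe_E_cherry_across:
  assumes "wedge v u w" "wedge u v x"
  shows "KE (cherry v u w) (cherry u v x)"
  using KBe_E_cherry_iff[OF assms] wedge_distinct[OF assms(1)] by auto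

lemma KBe_reachable_from_cherry:
  assumes "connected_graph VH E" "wedge b p q" and X: "X \<in> KV" and edges_in_wedges
  shows "KE\<^sup>*\<^sup>* (cherry b p q) X"
proof -
  define reached where "reached z \<longleftrightarrow> (\<forall>y w. wedge z y w \<longrightarrow> KE\<^sup>*\<^sup>* (cherry b p q) (cherry z y w))" for z
  have reached_if: "reached z" if "wedge z y w" "KE\<^sup>*\<^sup>* (cherry b p q) (cherry z y w)" for z y w
    using that cherries_same_centre_connected unfolding reached_def by (meson rtranclp_trans)
  text \<open>Leaves of H carry no cherries, so reachability passes through every edge z y as long as
    z has a second neighbour w.\<close>
  have reached_step: "reached y" if z: "reached z" "E z y" "E z w" "w \<noteq> y" for z y w
  proof (cases "\<exists>x. wedge y z x")
    case True
    then obtain x where "wedge y z x" by blast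
    moreover have "wedge z y w" using z unfolding wedge_def by auto
    moreover have "KE (cherry z y w) (cherry y z x)"
      using \<open>wedge z y w\<close> \<open>wedge y z x\<close> by (rule KBe_E_cherry_across)
    ultimately show ?thesis
      using reached_if z(1) unfolding reached_def by (meson rtranclp.rtrancl_into_rtrancl)
  next
    case False
    then have "x = z" if "E y x" for x using E_sym z(2) that unfolding wedge_def by blast
    then show ?thesis unfolding reached_def wedge_def by blast
  qed
  have "reached z \<and> (\<forall>y. E z y \<longrightarrow> reached y)" if "E\<^sup>*\<^sup>* b z" for z
    using that
  proof (induction rule: rtranclp_induct)
    case base
    have "reached b" using reached_if[OF assms(2)] by simp
    moreover have "reached y" if "E b y" for y
      using reached_step[OF \<open>reached b\<close> that] assms(2) unfolding wedge_def by (cases "y = p") auto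
    ultimately show ?case by blast
  next
    case (step z z')
    then have "reached z'" by blast
    moreover have "reached y" if "E z' y" for y
      using step reached_step[OF \<open>reached z'\<close> that, of z] E_sym by (cases "y = z") auto
    ultimately show ?case by blast
  qed
  moreover obtain v u w where "wedge v u w" "X = cherry v u w" using KBe_V_cherry[OF assms(4) X] by blast
  moreover have "E\<^sup>*\<^sup>* b v"
    using assms(1,2) \<open>wedge v u w\<close> edge_in_VH unfolding connected_graph_def wedge_def by blast
  ultimately show ?thesis unfolding reached_def by blast
qed

lemma KBe_connected:
  assumes "connected_graph VH E" "wedge b p q" edges_in_wedges
  shows "connected_graph KV KE"
  unfolding connected_graph_def
proof (intro ballI)
  fix S T assume "S \<in> KV" "T \<in> KV"
  have "symp KE" using KBe_E_sym by (rule sympI)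
  then have "KE\<^sup>*\<^sup>* S (cherry b p q)"
    using symp_rtranclp KBe_reachable_from_cherry[OF assms(1,2) \<open>S \<in> KV\<close> assms(3)] by (metis sympD)
  then show "KE\<^sup>*\<^sup>* S T"
    using KBe_reachable_from_cherry[OF assms(1,2) \<open>T \<in> KV\<close> assms(3)] by (rule rtranclp_trans)
qed

lemma KBe_path_if_no_wedge:
  assumes "connected_graph VH E" "E x y" "\<And>v u w. \<not> wedge v u w"
  shows "is_path_graph KV KE"
proof -
  have only_y: "\<And>z. E x z \<Longrightarrow> z = y" and only_x: "\<And>z. E y z \<Longrightarrow> z = x"
    using assms(2,3) E_sym unfolding wedge_def by blast+
  then have "VH = {x, y}" using connected_single_edge[OF assms(1,2)] by blast
  then have VG_eq: "VG = {(x, y), (y, x)}" using assms(2) only_x only_y E_sym unfolding burgeon_V_def by blast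
  have "x \<noteq> y" using assms(2) E_irrefl by auto
  then have complete: "induces_complete_bipartite EG VG"
    unfolding induces_complete_bipartite_def VG_eq using assms(2) E_sym
    by (intro exI[of _ "{(x, y)}"] exI[of _ "{(y, x)}"]) (auto simp: burgeon_E_iff E_irrefl)
  have "S = VG" if S: "biclique VG EG S" for S
  proof -
    have "induces_complete_bipartite EG S" "S \<subseteq> VG" using S unfolding biclique_def by auto
    then obtain A B where "A \<noteq> {}" "B \<noteq> {}" "A \<inter> B = {}" "S = A \<union> B"
      unfolding induces_complete_bipartite_def by blast
    then obtain s t where "s \<in> S" "t \<in> S" "s \<noteq> t" by blast
    with \<open>S \<subseteq> VG\<close> show ?thesis unfolding VG_eq by blast
  qed
  then have "KV = {VG}" using complete unfolding KBe_V_def biclique_def by auto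
  moreover have "\<not> KE S T" for S T using \<open>KV = {VG}\<close> unfolding KBe_E_def KBe_V_def by blast
  ultimately show ?thesis using is_path_graph_singleton by metis
qed

theorem KBe_cycle_path_or_necklace:
  assumes "connected_graph VH E" "has_edge E"
  shows "is_cycle_graph KV KE \<or> is_path_graph KV KE
    \<or> (\<exists>cs K. length cs \<ge> 6 \<and> induced_necklace KV KE cs K \<and> good_neighbours KV KE cs)"
proof (cases "\<exists>b p q. wedge b p q")
  case False
  then show ?thesis using KBe_path_if_no_wedge[OF assms(1)] assms(2) unfolding has_edge_def by blast
next
  case True
  then obtain b p q where "wedge b p q" by blast
  then have edges_in_wedges using edges_in_wedges_if_wedge assms(1) by blast
  show ?thesis
  proof (cases claws_are_components)
    case True
    interpret KBe: max_degree_2_graph KV KE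
      using KBe_graph KBe_max_degree_2[OF \<open>edges_in_wedges\<close> True] by unfold_locales
    have "cherry b p q \<in> KV" using \<open>wedge b p q\<close> by (rule cherry_in_KBe_V)
    then show ?thesis
      using KBe.connected_path_or_cycle KBe_connected[OF assms(1) \<open>wedge b p q\<close> \<open>edges_in_wedges\<close>]
      by blast
  qed (use necklace_unless_claws_are_components \<open>edges_in_wedges\<close> in blast)
qed

end

theorem mainTheorem17:
  fixes VH :: "'a set" and EH :: "'a \<Rightarrow> 'a \<Rightarrow> bool"
  assumes "graph VH EH" and "connected_graph VH EH" and "has_edge EH"
  defines "VG \<equiv> burgeon_V VH EH" and "EG \<equiv> burgeon_E EH"
  shows "is_cycle_graph (KBe_V VG EG) (KBe_E VG EG)
       \<or> is_path_graph (KBe_V VG EG) (KBe_E VG EG)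
       \<or> (\<exists>cs K. length cs \<ge> 6 \<and> induced_necklace (KBe_V VG EG) (KBe_E VG EG) cs K
              \<and> good_neighbours (KBe_V VG EG) (KBe_E VG EG) cs)"
  unfolding VG_def EG_def
  using burgeon_graph.KBe_cycle_path_or_necklace[OF burgeon_graph.intro[OF assms(1)] assms(2,3)] .

end
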